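(* Let $G$ be an $n\times n$ Game of Primes grid (defined in the context) with update map $F$, and let $s_0, s_1, s_2,\dots$ be its sequence of days, where $s_0$ is the configuration in which every cell is dormant and $s_{t+1}=F(s_t)$ for all $t\ge 0$. Let $S=\{s_t : t\ge 0\}$ be the set of all distinct days that occur. Then for every day $k$, there are at most two days $a\in S$ with $F(a)=k$.
   Context: A Game of Primes (GOPM) grid of dimension $n$ is an $n\times n$ grid whose cells are filled with the $n^2$ natural numbers $a, a+d, a+2d,\dots,a+(n^2-1)d$ (for fixed integers $a\ge 1$, $d\ge 1$) in snake-like (boustrophedon) order: the first row is filled left to right starting with $a$ in the top-left cell, the second row right to left, the third row left to right, and so on. Two distinct cells are neighbors if they are adjacent horizontally, vertically or diagonally (so each cell has at most 8 neighbors, a corner cell exactly 3). Each cell is in one of two states, excited or dormant. A configuration ("day") is an assignment of a state to every cell. For a configuration $s$ and a cell $c$, let $N_s(c)$ be the number of neighbors of $c$ that contain a prime number or are excited in $s$ (or both). The update map $F$ sends $s$ to the configuration $F(s)$ in which: a cell $c$ dormant in $s$ is excited in $F(s)$ iff $N_s(c)\ge 3$; a cell $c$ excited in $s$ is dormant in $F(s)$ iff $N_s(c)\ge 4$ or $N_s(c)=0$, and otherwise remains excited. Day $0$ is the configuration with all cells dormant, and day $t+1$ is $F$ applied to day $t$. *)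

theory Defs
  imports "HOL-Computational_Algebra.Primes"
begin

text \<open>Cells of the n x n grid are pairs (i, j) with i the row (0-based, top row 0)
  and j the column (0-based, leftmost column 0).  A configuration is a predicate
  on cells: True = excited, False = dormant.  Configurations are kept dormant
  outside the grid, so that equality of configurations is equality on the grid.\<close>

type_synonym cell = "nat \<times> nat"
type_synonym config = "cell \<Rightarrow> bool"

definition in_grid :: "nat \<Rightarrow> cell \<Rightarrow> bool" where
  "in_grid n c \<longleftrightarrow> fst c < n \<and> snd c < n"

text \<open>Snake (boustrophedon) filling: row i is filled left to right if i is even,
  right to left if i is odd; the k-th cell in filling order (k = 0, 1, ...) holds a + k d.\<close>
definition gopm_value :: "nat \<Rightarrow> nat \<Rightarrow> nat \<Rightarrow> cell \<Rightarrow> nat" where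
  "gopm_value n a d c =
     (let i = fst c; j = snd c;
          k = (if even i then i * n + j else i * n + (n - 1 - j))
      in a + k * d)"

definition neighbor :: "nat \<Rightarrow> cell \<Rightarrow> cell \<Rightarrow> bool" where
  "neighbor n c c' \<longleftrightarrow> in_grid n c' \<and> c' \<noteq> c \<and>
     \<bar>int (fst c') - int (fst c)\<bar> \<le> 1 \<and> \<bar>int (snd c') - int (snd c)\<bar> \<le> 1"

definition active_nbrs :: "nat \<Rightarrow> nat \<Rightarrow> nat \<Rightarrow> config \<Rightarrow> cell \<Rightarrow> nat" where
  "active_nbrs n a d s c =
     card {c'. neighbor n c c' \<and> (prime (gopm_value n a d c') \<or> s c')}"

definition gopm_step :: "nat \<Rightarrow> nat \<Rightarrow> nat \<Rightarrow> config \<Rightarrow> config" where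
  "gopm_step n a d s c =
     (in_grid n c \<and>
       (let N = active_nbrs n a d s c in
        if s c then \<not> (N \<ge> 4 \<or> N = 0) else N \<ge> 3))"

definition gopm_day :: "nat \<Rightarrow> nat \<Rightarrow> nat \<Rightarrow> nat \<Rightarrow> config" where
  "gopm_day n a d t = (gopm_step n a d ^^ t) (\<lambda>_. False)"

end

theory Submission
  imports Defs
begin

text \<open>Nothing about the grid rule (nor \<open>a, d \<ge> 1\<close>) is used: in the orbit of any point \<open>x\<close>
  under any map \<open>f\<close>, a point \<open>z\<close> has at most two preimages.  Let \<open>m < q\<close> be the first two
  times with \<open>(f ^^ Suc m) x = (f ^^ Suc q) x = z\<close>.  From time \<open>m + 1\<close> on the orbit is periodic
  with period \<open>q - m\<close>, so any later preimage time \<open>t\<close> reduces modulo that period to a preimage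
  time in \<open>(m, q]\<close>, which by minimality is \<open>q\<close>.  Hence every preimage in the orbit is
  \<open>(f ^^ m) x\<close> or \<open>(f ^^ q) x\<close>.\<close>

lemma funpow_periodic_from:
  fixes f :: "'a \<Rightarrow> 'a"
  assumes "(f ^^ (i + p)) x = (f ^^ i) x" and "i \<le> j"
  shows "(f ^^ (j + p)) x = (f ^^ j) x"
proof -
  have "(f ^^ (j + p)) x = (f ^^ (j - i)) ((f ^^ (i + p)) x)"
    using \<open>i \<le> j\<close> funpow_add[of "j - i" "i + p" f] by simp
  also have "\<dots> = (f ^^ (j - i)) ((f ^^ i) x)"
    using assms(1) by simp
  also have "\<dots> = (f ^^ j) x"
    using \<open>i \<le> j\<close> funpow_add[of "j - i" i f] by simp
  finally show ?thesis .
qed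

lemma funpow_periodic_mult:
  fixes f :: "'a \<Rightarrow> 'a"
  assumes "(f ^^ (i + p)) x = (f ^^ i) x" and "i \<le> j"
  shows "(f ^^ (j + c * p)) x = (f ^^ j) x"
proof (induction c)
  case 0
  show ?case by simp
next
  case (Suc c)
  have "(f ^^ (j + Suc c * p)) x = (f ^^ (j + c * p + p)) x"
    by (simp add: algebra_simps)
  also have "\<dots> = (f ^^ (j + c * p)) x"
    using funpow_periodic_from[OF assms(1)] \<open>i \<le> j\<close> by simp
  finally show ?case
    using Suc.IH by simp
qed

lemma funpow_periodic_mod:
  fixes f :: "'a \<Rightarrow> 'a"
  assumes "(f ^^ (i + p)) x = (f ^^ i) x" and "i \<le> j"
  shows "(f ^^ j) x = (f ^^ (i + (j - i) mod p)) x"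
proof -
  have "i + (j - i) mod p + (j - i) div p * p = j"
    using \<open>i \<le> j\<close> by simp
  then have "(f ^^ j) x = (f ^^ (i + (j - i) mod p + (j - i) div p * p)) x"
    by (simp only:)
  also have "\<dots> = (f ^^ (i + (j - i) mod p)) x"
    by (rule funpow_periodic_mult[OF assms(1)]) simp
  finally show ?thesis .
qed

lemma funpow_preimage_after_first_return:
  fixes f :: "'a \<Rightarrow> 'a"
  assumes m: "(f ^^ Suc m) x = z" and q: "(f ^^ Suc q) x = z" "m < q"
    and q_least: "\<And>t. m < t \<Longrightarrow> (f ^^ Suc t) x = z \<Longrightarrow> q \<le> t"
    and t: "(f ^^ Suc t) x = z" "m < t"
  shows "(f ^^ t) x = (f ^^ q) x"
proof -
  define p where "p = q - m"
  have period: "(f ^^ (Suc m + p)) x = (f ^^ Suc m) x"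
    using m q by (simp add: p_def)
  define t' where "t' = Suc m + (t - Suc m) mod p"
  have "(t - Suc m) mod p < p"
    using \<open>m < q\<close> by (simp add: p_def)
  then have t'_le: "t' \<le> q"
    using \<open>m < q\<close> unfolding t'_def p_def by linarith
  have same: "(f ^^ t) x = (f ^^ t') x"
    unfolding t'_def using funpow_periodic_mod[OF period] \<open>m < t\<close> by simp
  then have "(f ^^ Suc t') x = z"
    using t(1) by simp
  then have "q \<le> t'"
    using q_least by (simp add: t'_def)
  with t'_le same show ?thesis by simp
qed

lemma orbit_preimages_subset_two:
  obtains a b where "{y \<in> range (\<lambda>t. (f ^^ t) x). f y = z} \<subseteq> {a, b}"
proof -
  define m where "m = (LEAST t. (f ^^ Suc t) x = z)"
  define q where "q = (LEAST t. m < t \<and> (f ^^ Suc t) x = z)"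
  have "y \<in> {(f ^^ m) x, (f ^^ q) x}" if "y \<in> range (\<lambda>t. (f ^^ t) x)" and "f y = z" for y
  proof -
    obtain t where y: "y = (f ^^ t) x"
      using \<open>y \<in> range (\<lambda>t. (f ^^ t) x)\<close> by auto
    with \<open>f y = z\<close> have t: "(f ^^ Suc t) x = z"
      by simp
    have "m \<le> t"
      unfolding m_def using t by (rule Least_le)
    show ?thesis
    proof (cases "t = m")
      case True
      with y show ?thesis by simp
    next
      case False
      with \<open>m \<le> t\<close> have "m < t" by simp
      have q: "m < q \<and> (f ^^ Suc q) x = z"
        unfolding q_def by (rule LeastI[of _ t]) (use \<open>m < t\<close> t in simp)
      have m: "(f ^^ Suc m) x = z"
        unfolding m_def using t by (rule LeastI)
      have "(f ^^ t) x = (f ^^ q) x"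
      proof (rule funpow_preimage_after_first_return[OF m])
        show "(f ^^ Suc q) x = z" "m < q" using q by simp_all
        show "q \<le> s" if "m < s" "(f ^^ Suc s) x = z" for s
          unfolding q_def using that by (intro Least_le) simp
      qed (use t \<open>m < t\<close> in simp_all)
      with y show ?thesis by simp
    qed
  qed
  then show ?thesis
    by (intro that[of "(f ^^ m) x" "(f ^^ q) x"]) blast
qed

lemma orbit_preimages_card_le_two:
  "finite {y \<in> range (\<lambda>t. (f ^^ t) x). f y = z}
   \<and> card {y \<in> range (\<lambda>t. (f ^^ t) x). f y = z} \<le> 2"
proof -
  obtain a b where sub: "{y \<in> range (\<lambda>t. (f ^^ t) x). f y = z} \<subseteq> {a, b}"
    by (rule orbit_preimages_subset_two)
  have "card {y \<in> range (\<lambda>t. (f ^^ t) x). f y = z} \<le> card {a, b}"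
    by (rule card_mono[OF _ sub]) simp
  also have "\<dots> \<le> 2"
    by (simp add: card_insert_if)
  finally show ?thesis
    using finite_subset[OF sub] by simp
qed

theorem theorem4p1:
  fixes n a d :: nat and k :: config
  assumes "a \<ge> 1" and "d \<ge> 1"
  shows "finite {x \<in> range (gopm_day n a d). gopm_step n a d x = k}
       \<and> card {x \<in> range (gopm_day n a d). gopm_step n a d x = k} \<le> 2"
proof -
  have "gopm_day n a d = (\<lambda>t. (gopm_step n a d ^^ t) (\<lambda>_. False))"
    by (simp add: fun_eq_iff gopm_day_def)
  then show ?thesis
    using orbit_preimages_card_le_two by simp
qed

end
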